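(* Let $V$ be an $m$-dimensional vector space with volume form $\omega$, and let $(F,G,H)$ be a generic triple of decorated flags. For nonnegative integers $a,b,c,s$ with $a+b+c=m-s$ and $a,b,c>0$, $$\Delta^s_{a,b,c}\,\Delta^{s+1}_{a,b-1,c}=\Delta^s_{a+1,b-1,c}\,\Delta^{s+1}_{a-1,b,c}+\Delta^s_{a,b-1,c+1}\,\Delta^{s+1}_{a,b,c-1}.$$
   Context: A decorated flag in $(V,\omega)$ is a flag $F_1\subset\cdots\subset F_{m-1}$ ($\dim F_i=i$) with nonzero $f_{(i)}\in\wedge^iF_i$ for $1\le i\le m-1$; put $f_{(0)}=1$ and let $f_{(m)}\in\wedge^mV$ with $\langle f_{(m)},\omega\rangle=1$; similarly $G=(G_\bullet,g_{(i)})$, $H=(H_\bullet,h_{(i)})$. For generic $(F,G)$ there is a basis $f_1,\dots,f_m$ of $V$ with $f_k\in F_k\cap G_{m+1-k}$ and $f_{(k)}=f_1\wedge\cdots\wedge f_k$ for all $k$; for generic $(G,H)$ there is a basis $h_1,\dots,h_m$ with $h_k\in G_{m+1-k}\cap H_k$ and $h_{(k)}=h_k\wedge h_{k-1}\wedge\cdots\wedge h_1$. Put $f_{s,(k)}=f_{s+1}\wedge\cdots\wedge f_{s+k}$ and $h_{(k),s}=h_{s+k}\wedge\cdots\wedge h_{s+1}$. For $a+b+c=m-s$, $f_{s,(a)}\wedge g_{(b)}\wedge h_{(c),s}\in\wedge^{m-s}G_{m-s}$ (with $G_m=V$, $g_{(m)}$ normalized by $\langle g_{(m)},\omega\rangle=1$),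 and $\Delta^s_{a,b,c}:=\langle f_{s,(a)}\wedge g_{(b)}\wedge h_{(c),s},\omega_s\rangle$, where $\omega_s$ is the volume form on $G_{m-s}$ with $\langle g_{(m-s)},\omega_s\rangle=\langle f_{(s)}\wedge g_{(m-s)},\omega\rangle\langle g_{(m-s)}\wedge h_{(s)},\omega\rangle$. For $s=0$, $\Delta^0_{a,b,c}=\Delta_{a,b,c}:=\langle f_{(a)}\wedge g_{(b)}\wedge h_{(c)},\omega\rangle$. *)

theory Defs
  imports "Jordan_Normal_Form.Determinant"
begin

text \<open>Model: V = k^m for a field k, vectors are coordinate functions nat => k
  supported on {..<m}.  A k-vector (element of the k-th exterior power of V) is
  represented by its Pluecker coordinates, a function on index sets I with
  card I = k.\<close>

definition vecs :: "nat \<Rightarrow> (nat \<Rightarrow> 'a::field) set" where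
  "vecs m = {v. \<forall>i\<ge>m. v i = 0}"

definition lcomb :: "(nat \<Rightarrow> 'a::field) \<Rightarrow> (nat \<Rightarrow> nat \<Rightarrow> 'a) \<Rightarrow> nat \<Rightarrow> (nat \<Rightarrow> 'a)" where
  "lcomb c u d = (\<lambda>i. \<Sum>j<d. c j * u j i)"

definition lin_indep :: "(nat \<Rightarrow> nat \<Rightarrow> 'a::field) \<Rightarrow> nat \<Rightarrow> bool" where
  "lin_indep u d \<longleftrightarrow> (\<forall>c. lcomb c u d = (\<lambda>_. 0) \<longrightarrow> (\<forall>j<d. c j = 0))"

definition subspace_dim :: "nat \<Rightarrow> (nat \<Rightarrow> 'a::field) set \<Rightarrow> nat \<Rightarrow> bool" where
  "subspace_dim m W d \<longleftrightarrow> (\<exists>u. (\<forall>j<d. u j \<in> vecs m) \<and> lin_indep u d \<and> W = {lcomb c u d | c. True})"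

definition wedge :: "nat \<Rightarrow> (nat \<Rightarrow> nat \<Rightarrow> 'a::field) \<Rightarrow> nat \<Rightarrow> nat set \<Rightarrow> 'a" where
  "wedge m u k I = (if I \<subseteq> {..<m} \<and> card I = k
      then det (mat k k (\<lambda>(r, j). u j (sorted_list_of_set I ! r))) else 0)"

definition fapp :: "nat \<Rightarrow> (nat \<Rightarrow> 'b) \<Rightarrow> (nat \<Rightarrow> 'b) \<Rightarrow> nat \<Rightarrow> 'b" where
  "fapp a u v = (\<lambda>j. if j < a then u j else v (j - a))"

text \<open>The volume form omega on k^m is om times the standard determinant form;
  pairing of the top wedge of an m-frame with omega.\<close>
definition pair_top :: "nat \<Rightarrow> 'a::field \<Rightarrow> (nat \<Rightarrow> nat \<Rightarrow> 'a) \<Rightarrow> 'a" where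
  "pair_top m om u = om * wedge m u m {..<m}"

text \<open>Decorated flag: subspaces Fs 1 \<subseteq> ... \<subseteq> Fs (m-1), dim Fs i = i, with
  decorations f_(i) = wedge of the frame fr i (i vectors of Fs i), nonzero;
  f_(m) = wedge of the frame fr m with <f_(m), omega> = 1.  (Every element of the
  line \<wedge>^i F_i is such a wedge.)\<close>
definition decorated_flag :: "nat \<Rightarrow> 'a::field \<Rightarrow> (nat \<Rightarrow> (nat \<Rightarrow> 'a) set) \<Rightarrow> (nat \<Rightarrow> nat \<Rightarrow> nat \<Rightarrow> 'a) \<Rightarrow> bool" where
  "decorated_flag m om Fs fr \<longleftrightarrow>
     (\<forall>i\<in>{1..<m}. subspace_dim m (Fs i) i \<and> (\<forall>j<i. fr i j \<in> Fs i) \<and> wedge m (fr i) i \<noteq> (\<lambda>_. 0))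
   \<and> (\<forall>i. 1 \<le> i \<and> i + 1 < m \<longrightarrow> Fs i \<subseteq> Fs (i + 1))
   \<and> (\<forall>j<m. fr m j \<in> vecs m) \<and> pair_top m om (fr m) = 1"

text \<open>Pairwise genericity (transversality) of two flags\<close>
definition transverse :: "nat \<Rightarrow> (nat \<Rightarrow> (nat \<Rightarrow> 'a::field) set) \<Rightarrow> (nat \<Rightarrow> (nat \<Rightarrow> 'a) set) \<Rightarrow> bool" where
  "transverse m Fs Gs \<longleftrightarrow> (\<forall>i\<in>{1..<m}. Fs i \<inter> Gs (m - i) = {\<lambda>_. 0})"

text \<open>The frame f_{s+1}, ..., f_{s+a}, (frame of g_(b)), h_{s+c}, ..., h_{s+1}\<close>
definition Xframe :: "(nat \<Rightarrow> nat \<Rightarrow> nat \<Rightarrow> 'a) \<Rightarrow> (nat \<Rightarrow> nat \<Rightarrow> 'a) \<Rightarrow> (nat \<Rightarrow> nat \<Rightarrow> 'a)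
     \<Rightarrow> nat \<Rightarrow> nat \<Rightarrow> nat \<Rightarrow> nat \<Rightarrow> nat \<Rightarrow> nat \<Rightarrow> 'a" where
  "Xframe gfr fb hb s a b c =
     fapp a (\<lambda>j. fb (s + 1 + j)) (fapp b (gfr b) (\<lambda>j. hb (s + c - j)))"

text \<open>Delta^s_{a,b,c} = <X, omega_s> with X = f_{s,(a)} /\ g_(b) /\ h_{(c),s} in \<wedge>^{m-s} G_{m-s}.
  Since \<wedge>^{m-s} G_{m-s} is the line spanned by g_(m-s), X = r g_(m-s), and
  <X, omega_s> = r <g_(m-s), omega_s> = r <f_(s)/\g_(m-s),omega> <g_(m-s)/\h_(s),omega>.\<close>
definition Delta :: "nat \<Rightarrow> 'a::field \<Rightarrow> (nat \<Rightarrow> nat \<Rightarrow> nat \<Rightarrow> 'a) \<Rightarrow> (nat \<Rightarrow> nat \<Rightarrow> nat \<Rightarrow> 'a)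
     \<Rightarrow> (nat \<Rightarrow> nat \<Rightarrow> nat \<Rightarrow> 'a) \<Rightarrow> (nat \<Rightarrow> nat \<Rightarrow> 'a) \<Rightarrow> (nat \<Rightarrow> nat \<Rightarrow> 'a)
     \<Rightarrow> nat \<Rightarrow> nat \<Rightarrow> nat \<Rightarrow> nat \<Rightarrow> 'a" where
  "Delta m om ffr gfr hfr fb hb s a b c =
     (THE r. wedge m (Xframe gfr fb hb s a b c) (m - s) = (\<lambda>I. r * wedge m (gfr (m - s)) (m - s) I))
     * pair_top m om (fapp s (ffr s) (gfr (m - s)))
     * pair_top m om (fapp (m - s) (gfr (m - s)) (hfr s))"

end

theory Submission
  imports Defs
begin

text \<open>
  In the line \<wedge>^{m-s} G_{m-s} the element X = f_{s,(a)} \<and> g_(b) \<and> h_{(c),s} is r g_(m-s), and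
  the same r is the ratio of \<langle>f_(s) \<and> X, \<omega>\<rangle> to \<langle>f_(s) \<and> g_(m-s), \<omega>\<rangle>. Writing f_(s) = f_1 \<and> ... \<and> f_s,
    \<Delta>^s_{a,b,c} = \<langle>f_1 \<and> ... \<and> f_{s+a} \<and> g_(b) \<and> h_{s+c} \<and> ... \<and> h_{s+1}, \<omega>\<rangle> \<langle>g_(m-s) \<and> h_(s), \<omega>\<rangle>,
  so after cancelling the second factors the identity is a three-term Grassmann-Pluecker relation
  between m \<times> m determinants. It comes from the relation
  \<Sum>_i (-1)^i det(V without v_i) det(W, v_i) = 0 for m + 1 vectors V and m - 1 vectors W, in which
  all but three terms vanish: the other v_i are columns of W or lie in the span of g_(b),
  which contains g_(b-1).
\<close>

section \<open>Determinants of column frames\<close>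

definition frame_det :: "nat \<Rightarrow> (nat \<Rightarrow> nat \<Rightarrow> 'a::comm_ring_1) \<Rightarrow> 'a" where
  "frame_det n u = det (mat n n (\<lambda>(r, j). u j r))"

definition drop_col :: "nat \<Rightarrow> (nat \<Rightarrow> 'b) \<Rightarrow> nat \<Rightarrow> 'b" where
  "drop_col i v j = (if j < i then v j else v (Suc j))"

lemma frame_det_cong:
  "(\<And>j. j < n \<Longrightarrow> u j = v j) \<Longrightarrow> frame_det n u = frame_det n v"
  unfolding frame_det_def by (rule arg_cong[where f = det], rule eq_matI) auto

lemma frame_det_cong_rows:
  "(\<And>j r. j < n \<Longrightarrow> r < n \<Longrightarrow> u j r = v j r) \<Longrightarrow> frame_det n u = frame_det n v"
  unfolding frame_det_def by (rule arg_cong[where f = det], rule eq_matI) auto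

lemma frame_det_linear_col:
  assumes k: "k < n" and S: "finite S"
  shows "frame_det n (u(k := (\<lambda>r. \<Sum>i\<in>S. c i * v i r))) = (\<Sum>i\<in>S. c i * frame_det n (u(k := v i)))"
proof -
  let ?A = "\<lambda>w. mat n n (\<lambda>(r, j). (u(k := w)) j r)"
  define cof where "cof r = cofactor (?A (\<lambda>_. 0)) r k" for r
  have expand: "frame_det n (u(k := w)) = (\<Sum>r<n. w r * cof r)" for w
  proof -
    have "frame_det n (u(k := w)) = (\<Sum>r<n. ?A w $$ (r, k) * cofactor (?A w) r k)"
      unfolding frame_det_def by (rule laplace_expansion_column[OF _ k]) auto
    also have "\<dots> = (\<Sum>r<n. w r * cof r)"
    proof (rule sum.cong[OF refl])
      fix r assume r: "r \<in> {..<n}"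
      have "mat_delete (?A w) r k = mat_delete (?A (\<lambda>_. 0)) r k"
        unfolding mat_delete_def by (rule eq_matI) auto
      then show "?A w $$ (r, k) * cofactor (?A w) r k = w r * cof r"
        using r k unfolding cofactor_def cof_def by auto
    qed
    finally show ?thesis .
  qed
  show ?thesis unfolding expand
    by (simp add: sum_distrib_left sum_distrib_right mult.assoc sum.swap[of _ S])
qed

lemma frame_det_zero_col:
  assumes "k < n" and "\<And>r. r < n \<Longrightarrow> u k r = 0"
  shows "frame_det n u = 0"
proof -
  have "frame_det n u = frame_det n (u(k := (\<lambda>r. \<Sum>i\<in>{}. 0 * u i r)))"
    by (rule frame_det_cong_rows) (auto simp: assms)
  also have "\<dots> = 0" by (subst frame_det_linear_col) (use assms in auto)
  finally show ?thesis .
qed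

lemma frame_det_repeated_col:
  assumes "i \<noteq> j" "i < n" "j < n" and "\<And>r. r < n \<Longrightarrow> u i r = u j r"
  shows "frame_det n u = 0"
  unfolding frame_det_def
  by (rule det_identical_columns[OF _ assms(1-3)]) (auto intro!: eq_vecI simp: assms col_def)

lemma frame_det_lincomb_col:
  assumes k: "k < n" and "a + b \<le> k" and u: "\<And>r. u k r = (\<Sum>l<b. d l * u (a + l) r)"
  shows "frame_det n u = 0"
proof -
  have "frame_det n u = frame_det n (u(k := (\<lambda>r. \<Sum>l\<in>{..<b}. d l * u (a + l) r)))"
    by (rule frame_det_cong) (simp add: u fun_eq_iff)
  also have "\<dots> = (\<Sum>l<b. d l * frame_det n (u(k := u (a + l))))"
    by (rule frame_det_linear_col) (use k in auto)
  also have "\<dots> = 0"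
  proof (rule sum.neutral, intro ballI)
    fix l assume "l \<in> {..<b}"
    then have "frame_det n (u(k := u (a + l))) = 0"
      by (intro frame_det_repeated_col[of "a + l" k]) (use assms in auto)
    then show "d l * frame_det n (u(k := u (a + l))) = 0" by simp
  qed
  finally show ?thesis .
qed

lemma frame_det_permute:
  assumes p: "p permutes {..<n}"
  shows "frame_det n (\<lambda>j. u (p j)) = signof p * frame_det n u"
proof -
  have rows: "frame_det n w = det (mat n n (\<lambda>(j, r). w j r))" for w
  proof -
    have "transpose_mat (mat n n (\<lambda>(r, j). w j r)) = mat n n (\<lambda>(j, r). w j r)"
      by (rule eq_matI) auto
    then show ?thesis unfolding frame_det_def
      by (metis det_transpose mat_carrier)
  qed
  have pn: "i < n \<Longrightarrow> p i < n" for i using permutes_in_image[OF p] by simp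
  have "frame_det n (\<lambda>j. u (p j)) = det (mat n n (\<lambda>(i, j). mat n n (\<lambda>(j, r). u j r) $$ (p i, j)))"
    unfolding rows by (rule arg_cong[where f = det], rule eq_matI) (auto simp: pn)
  also have "\<dots> = signof p * frame_det n u"
    unfolding rows by (rule det_permute_rows) (use p in \<open>auto simp: lessThan_atLeast0\<close>)
  finally show ?thesis .
qed

lemma frame_det_move_col_last:
  "i < n \<Longrightarrow> frame_det n ((drop_col i u)(n - 1 := u i)) = (-1) ^ (n - 1 - i) * frame_det n u"
proof (induction "n - 1 - i" arbitrary: i u)
  case 0
  then have "i = n - 1" by simp
  then show ?case
    by (simp add: drop_col_def, intro frame_det_cong) (auto simp: not_less)
next
  case (Suc d)
  define w where "w = u \<circ> Transposition.transpose i (Suc i)"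
  have i: "Suc i < n" "d = n - 1 - Suc i" using Suc.hyps Suc.prems by auto
  have "frame_det n w = - frame_det n u"
    using frame_det_permute[of "Transposition.transpose i (Suc i)" n u] i
    by (simp add: w_def o_def permutes_swap_id sign_swap_id)
  moreover have "(drop_col i u)(n - 1 := u i) = (drop_col (Suc i) w)(n - 1 := w (Suc i))"
    using i by (auto simp: fun_eq_iff drop_col_def w_def transpose_def less_Suc_eq)
  moreover have "n - 1 - i = Suc (n - 1 - Suc i)" using i by simp
  ultimately show ?case
    using Suc.hyps(1)[OF i(2) i(1), of w] by simp
qed

lemma frame_det_mult:
  assumes "\<And>j r. j < n \<Longrightarrow> r < n \<Longrightarrow> v j r = (\<Sum>l<n. C l j * u l r)"
  shows "frame_det n v = det (mat n n (\<lambda>(l, j). C l j)) * frame_det n u"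
proof -
  have "mat n n (\<lambda>(r, j). v j r) = mat n n (\<lambda>(r, j). u j r) * mat n n (\<lambda>(l, j). C l j)"
    by (rule eq_matI) (auto simp: assms scalar_prod_def mult.commute intro!: sum.cong)
  then show ?thesis
    unfolding frame_det_def by (simp add: det_mult[of _ n] mult.commute)
qed

lemma det_embed_block:
  fixes C :: "'a::idom mat"
  assumes C: "C \<in> carrier_mat k k" and n: "a + k \<le> n"
  shows "det (mat n n (\<lambda>(l, j). if a \<le> l \<and> l < a + k \<and> a \<le> j \<and> j < a + k then C $$ (l - a, j - a)
             else if l = j then 1 else 0)) = det C"
proof -
  let ?B = "four_block_mat (four_block_mat (1\<^sub>m a) (0\<^sub>m a k) (0\<^sub>m k a) C)
              (0\<^sub>m (a + k) (n - a - k)) (0\<^sub>m (n - a - k) (a + k)) (1\<^sub>m (n - a - k))"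
  have "mat n n (\<lambda>(l, j). if a \<le> l \<and> l < a + k \<and> a \<le> j \<and> j < a + k then C $$ (l - a, j - a)
             else if l = j then 1 else 0) = ?B"
    by (rule eq_matI) (use C n in \<open>auto simp: four_block_mat_def Let_def\<close>)
  moreover have "det ?B = det (four_block_mat (1\<^sub>m a) (0\<^sub>m a k) (0\<^sub>m k a) C)"
    by (subst det_four_block_mat_upper_right_zero) (use C in auto)
  moreover have "\<dots> = det C"
    by (subst det_four_block_mat_upper_right_zero) (use C in auto)
  ultimately show ?thesis by simp
qed

lemma frame_det_block_mult:
  fixes u v :: "nat \<Rightarrow> nat \<Rightarrow> 'a::idom"
  assumes n: "a + k \<le> n"
    and blk: "\<And>j r. j < k \<Longrightarrow> r < n \<Longrightarrow> v (a + j) r = (\<Sum>l<k. C l j * u (a + l) r)"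
    and out: "\<And>j. j < n \<Longrightarrow> j < a \<or> a + k \<le> j \<Longrightarrow> v j = u j"
  shows "frame_det n v = det (mat k k (\<lambda>(l, j). C l j)) * frame_det n u"
proof -
  define D where "D l j = (if a \<le> l \<and> l < a + k \<and> a \<le> j \<and> j < a + k then C (l - a) (j - a)
             else if l = j then 1 else (0::'a))" for l j
  have "frame_det n v = det (mat n n (\<lambda>(l, j). D l j)) * frame_det n u"
  proof (rule frame_det_mult)
    fix j r assume j: "j < n" and r: "r < n"
    show "v j r = (\<Sum>l<n. D l j * u l r)"
    proof (cases "a \<le> j \<and> j < a + k")
      case True
      then obtain j' where j': "j = a + j'" "j' < k" using le_Suc_ex by fastforce
      have "(\<Sum>l<n. D l j * u l r) = (\<Sum>l\<in>{a..<a + k}. C (l - a) j' * u l r)"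
        by (rule sum.mono_neutral_cong_right) (use n j' in \<open>auto simp: D_def\<close>)
      also have "\<dots> = (\<Sum>l<k. C l j' * u (a + l) r)"
        by (rule sum.reindex_bij_witness[of _ "\<lambda>l. a + l" "\<lambda>l. l - a"]) auto
      finally show ?thesis using blk[OF j'(2) r] j' by simp
    next
      case False
      have "(\<Sum>l<n. D l j * u l r) = (\<Sum>l\<in>{j}. D l j * u l r)"
        by (rule sum.mono_neutral_cong_right) (use j False in \<open>auto simp: D_def\<close>)
      then show ?thesis using False out[OF j] by (auto simp: D_def)
    qed
  qed
  moreover have "mat n n (\<lambda>(l, j). D l j) = mat n n (\<lambda>(l, j). if a \<le> l \<and> l < a + k \<and> a \<le> j \<and> j < a + k
      then mat k k (\<lambda>(l, j). C l j) $$ (l - a, j - a) else if l = j then 1 else 0)"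
    by (rule eq_matI) (auto simp: D_def)
  ultimately show ?thesis using det_embed_block[of "mat k k (\<lambda>(l, j). C l j)" k a n] n by simp
qed

lemma frame_det_minors_relation:
  assumes r: "r < n"
  shows "(\<Sum>i\<le>n. (-1) ^ i * frame_det n (drop_col i v) * v i r) = 0"
proof -
  let ?A = "mat (Suc n) (Suc n) (\<lambda>(i, j). if i = 0 then v j r else v j (i - 1))"
  have "det ?A = 0"
    by (rule det_identical_rows[of _ "Suc n" 0 "Suc r"]) (use r in \<open>auto intro!: eq_vecI\<close>)
  moreover have "det ?A = (\<Sum>j<Suc n. ?A $$ (0, j) * cofactor ?A 0 j)"
    by (rule laplace_expansion_row) auto
  moreover have "\<dots> = (\<Sum>i\<le>n. (-1) ^ i * frame_det n (drop_col i v) * v i r)"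
  proof (rule sum.cong)
    fix j assume j: "j \<in> {..n}"
    have "mat_delete ?A 0 j = mat n n (\<lambda>(r, i). drop_col j v i r)"
      unfolding mat_delete_def drop_col_def by (rule eq_matI) auto
    then show "?A $$ (0, j) * cofactor ?A 0 j = (-1) ^ j * frame_det n (drop_col j v) * v j r"
      using j unfolding cofactor_def frame_det_def by auto
  qed auto
  ultimately show ?thesis by simp
qed

lemma frame_det_grassmann_pluecker:
  assumes "k < n"
  shows "(\<Sum>i\<le>n. (-1) ^ i * frame_det n (drop_col i v) * frame_det n (w(k := v i))) = 0"
proof -
  have "(\<Sum>i\<le>n. (-1) ^ i * frame_det n (drop_col i v) * frame_det n (w(k := v i)))
      = frame_det n (w(k := (\<lambda>r. \<Sum>i\<le>n. ((-1) ^ i * frame_det n (drop_col i v)) * v i r)))"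
    by (subst frame_det_linear_col) (use assms in auto)
  also have "\<dots> = 0"
    by (rule frame_det_zero_col[OF assms]) (simp add: frame_det_minors_relation)
  finally show ?thesis .
qed

lemma span_coeffs:
  assumes "\<And>j. j < k \<Longrightarrow> X j \<in> {lcomb d u b | d. True}"
  obtains C where "\<And>j i. j < k \<Longrightarrow> X j i = (\<Sum>l<b. C l j * u l i)"
proof -
  have "\<forall>j. \<exists>d. j < k \<longrightarrow> X j = lcomb d u b" using assms by blast
  then obtain d where "\<And>j. j < k \<Longrightarrow> X j = lcomb (d j) u b" by metis
  then show ?thesis by (intro that[of "\<lambda>l j. d j l"]) (simp add: lcomb_def)
qed

lemma frame_det_span_col_after_block:
  fixes v u :: "nat \<Rightarrow> nat \<Rightarrow> 'a::field"
  assumes k: "a + b \<le> k" "k < n"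
    and blk: "\<And>j. j < b \<Longrightarrow> v (a + j) \<in> {lcomb d u b | d. True}"
    and col: "v k \<in> {lcomb d u b | d. True}"
  shows "frame_det n v = 0"
proof -
  obtain C where C: "\<And>j i. j < b \<Longrightarrow> v (a + j) i = (\<Sum>l<b. C l j * u l i)"
    using span_coeffs[of b "\<lambda>j. v (a + j)" u b] blk by blast
  obtain d where d: "\<And>i. v k i = (\<Sum>l<b. d l * u l i)"
    using col by (auto simp: lcomb_def)
  define v' where "v' j = (if a \<le> j \<and> j < a + b then u (j - a) else v j)" for j
  have "frame_det n v = det (mat b b (\<lambda>(l, j). C l j)) * frame_det n v'"
    by (rule frame_det_block_mult[where a = a and k = b and u = v'])
       (use k in \<open>auto simp: v'_def C\<close>)
  also have "frame_det n v' = 0"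
    by (rule frame_det_lincomb_col[OF k(2) k(1), of _ d]) (use k in \<open>simp add: v'_def d\<close>)
  finally show ?thesis by simp
qed

lemma drop_col_fapp_Suc: "drop_col a (fapp (Suc a) A Z) = fapp a A Z"
  by (auto simp: fun_eq_iff drop_col_def fapp_def)

lemma drop_col_fapp_fapp_shift:
  "drop_col (a + b) (fapp a A (fapp b B (\<lambda>j. H (Suc T - j)))) = fapp a A (fapp b B (\<lambda>j. H (T - j)))"
  by (auto simp: fun_eq_iff drop_col_def fapp_def Suc_diff_Suc)

lemma frame_det_fapp_last_col:
  assumes "a < n"
  shows "frame_det n ((fapp a A Z)(n - 1 := A a)) = (-1) ^ (n - 1 - a) * frame_det n (fapp (Suc a) A Z)"
  using frame_det_move_col_last[OF assms, of "fapp (Suc a) A Z"]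
  by (simp add: drop_col_fapp_Suc) (simp add: fapp_def)

lemma frame_det_fapp_fapp_last_col:
  assumes "a + b < n"
  shows "frame_det n ((fapp a A (fapp b B (\<lambda>j. H (T - j))))(n - 1 := H (Suc T)))
       = (-1) ^ (n - 1 - (a + b)) * frame_det n (fapp a A (fapp b B (\<lambda>j. H (Suc T - j))))"
  using frame_det_move_col_last[OF assms, of "fapp a A (fapp b B (\<lambda>j. H (Suc T - j)))"]
  by (simp add: drop_col_fapp_fapp_shift) (simp add: fapp_def)

lemma frame_det_drop_col_last: "frame_det n (drop_col n v) = frame_det n v"
  by (rule frame_det_cong) (simp add: drop_col_def)

lemma pluecker_sum_three_terms:
  fixes n p b c t :: nat and A H u :: "nat \<Rightarrow> nat \<Rightarrow> 'a::field" and G :: "nat \<Rightarrow> nat \<Rightarrow> nat \<Rightarrow> 'a"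
  defines "V \<equiv> fapp (p + 1) A (fapp (b - 1) (G (b - 1)) (\<lambda>j. H (t + 1 - j)))"
    and "W \<equiv> fapp p A (fapp b (G b) (\<lambda>j. H (t - j)))"
  assumes n: "n = p + b + c" and b: "0 < b" and c: "0 < c"
    and G_b: "\<And>j. j < b \<Longrightarrow> G b j \<in> {lcomb d u b | d. True}"
    and G_b1: "\<And>j. j < b - 1 \<Longrightarrow> G (b - 1) j \<in> {lcomb d u b | d. True}"
  shows "(\<Sum>i\<in>{p, p + b, n}. (-1) ^ i * frame_det n (drop_col i V) * frame_det n (W(n - 1 := V i))) = 0"
proof -
  have last: "p + b \<le> n - 1" "n - 1 < n" using n c by auto
  have vanish: "frame_det n (W(n - 1 := V i)) = 0" if i: "i \<le> n" "i \<notin> {p, p + b, n}" for i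
  proof -
    have "i \<noteq> p" "i \<noteq> p + b" "i \<noteq> n" using i by auto
    then consider "i < p" | "p < i" "i < p + b" | "p + b < i" "i < n" using i(1) by linarith
    then show ?thesis
    proof cases
      case 1
      then show ?thesis
        by (intro frame_det_repeated_col[of i "n - 1"]) (use last in \<open>auto simp: V_def W_def fapp_def\<close>)
    next
      case 2
      then show ?thesis
        by (intro frame_det_span_col_after_block[of p b "n - 1" n _ u])
           (use last G_b G_b1 in \<open>auto simp: V_def W_def fapp_def\<close>)
    next
      case 3
      then have "t + 1 - (i - Suc p - (b - 1)) = t - (i - 1 - p - b)" using b by simp
      with 3 show ?thesis
        by (intro frame_det_repeated_col[of "i - 1" "n - 1"]) (use last b in \<open>auto simp: V_def W_def fapp_def\<close>)
    qed
  qed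
  have "(\<Sum>i\<le>n. (-1) ^ i * frame_det n (drop_col i V) * frame_det n (W(n - 1 := V i))) = 0"
    by (rule frame_det_grassmann_pluecker[OF last(2)])
  moreover have "(\<Sum>i\<le>n. (-1) ^ i * frame_det n (drop_col i V) * frame_det n (W(n - 1 := V i)))
      = (\<Sum>i\<in>{p, p + b, n}. (-1) ^ i * frame_det n (drop_col i V) * frame_det n (W(n - 1 := V i)))"
    by (rule sum.mono_neutral_right) (use n vanish in auto)
  ultimately show ?thesis by simp
qed

lemma frame_det_three_term:
  fixes n :: nat and A H u :: "nat \<Rightarrow> nat \<Rightarrow> 'a::field" and G :: "nat \<Rightarrow> nat \<Rightarrow> nat \<Rightarrow> 'a"
  defines "D P B T \<equiv> frame_det n (fapp P A (fapp B (G B) (\<lambda>j. H (T - j))))"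
  assumes n: "n = p + b + c" and b: "0 < b" and c: "0 < c"
    and G_b: "\<And>j. j < b \<Longrightarrow> G b j \<in> {lcomb d u b | d. True}"
    and G_b1: "\<And>j. j < b - 1 \<Longrightarrow> G (b - 1) j \<in> {lcomb d u b | d. True}"
  shows "D p b t * D (p + 1) (b - 1) (t + 1)
       = D (p + 1) (b - 1) t * D p b (t + 1) + D p (b - 1) (t + 1) * D (p + 1) b t"
proof -
  define V where "V = fapp (p + 1) A (fapp (b - 1) (G (b - 1)) (\<lambda>j. H (t + 1 - j)))"
  define W where "W = fapp p A (fapp b (G b) (\<lambda>j. H (t - j)))"
  define summand where "summand i = (-1) ^ i * frame_det n (drop_col i V) * frame_det n (W(n - 1 := V i))"
    for i
  have last: "p + b \<le> n - 1" "n - 1 < n" and b1: "p + 1 + (b - 1) = p + b" using n b c by auto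
  have sum3: "summand p + summand (p + b) + summand n = 0"
    using pluecker_sum_three_terms[where p = p and b = b and c = c and t = t and A = A and H = H
        and G = G and u = u and n = n] n b c G_b G_b1
    unfolding summand_def V_def W_def by (simp add: algebra_simps)
  have sp: "summand p = (-1) ^ p * (-1) ^ (n - 1 - p) * (D p (b - 1) (t + 1) * D (p + 1) b t)"
    using frame_det_fapp_last_col[of p n A "fapp b (G b) (\<lambda>j. H (t - j))"] last
    by (simp add: summand_def D_def V_def W_def drop_col_fapp_Suc) (simp add: fapp_def)
  have spb: "summand (p + b)
      = (-1) ^ (p + b) * (-1) ^ (n - 1 - (p + b)) * (D (p + 1) (b - 1) t * D p b (t + 1))"
  proof -
    have "V (p + b) = H (Suc t)" "drop_col (p + b) V = fapp (p + 1) A (fapp (b - 1) (G (b - 1)) (\<lambda>j. H (t - j)))"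
      using drop_col_fapp_fapp_shift[of "p + 1" "b - 1" A "G (b - 1)" H t] b1
      by (simp_all add: V_def fapp_def)
    then show ?thesis
      using frame_det_fapp_fapp_last_col[of p b n A "G b" H t] last
      by (simp add: summand_def D_def W_def)
  qed
  have sn: "summand n = (-1) ^ n * (D (p + 1) (b - 1) (t + 1) * D p b t)"
  proof -
    have "frame_det n (W(n - 1 := V n)) = D p b t"
      unfolding D_def by (rule frame_det_cong) (use n b c in \<open>auto simp: V_def W_def fapp_def\<close>)
    then show ?thesis by (simp add: summand_def D_def V_def frame_det_drop_col_last)
  qed
  have sign: "(-1::'a) ^ p * (-1) ^ (n - 1 - p) = (-1) ^ (n - 1)"
    "(-1::'a) ^ (p + b) * (-1) ^ (n - 1 - (p + b)) = (-1) ^ (n - 1)"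
    "(-1::'a) ^ n = - ((-1) ^ (n - 1))"
    using last by (simp_all flip: power_add) (cases n; simp)
  from sum3 have "(-1) ^ (n - 1) * (D p (b - 1) (t + 1) * D (p + 1) b t)
      + (-1) ^ (n - 1) * (D (p + 1) (b - 1) t * D p b (t + 1))
      + - ((-1) ^ (n - 1)) * (D (p + 1) (b - 1) (t + 1) * D p b t) = 0"
    by (simp only: sp spb sn sign)
  then have "(-1) ^ (n - 1) * (D p (b - 1) (t + 1) * D (p + 1) b t
      + D (p + 1) (b - 1) t * D p b (t + 1) - D (p + 1) (b - 1) (t + 1) * D p b t) = 0"
    by (simp add: algebra_simps)
  then have "D p (b - 1) (t + 1) * D (p + 1) b t + D (p + 1) (b - 1) t * D p b (t + 1)
      - D (p + 1) (b - 1) (t + 1) * D p b t = 0" by simp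
  then show ?thesis by (simp add: algebra_simps)
qed

section \<open>Wedges in a flag and the functions Delta\<close>

lemma wedge_top: "wedge m Y m I = (if I = {..<m} then frame_det m Y else 0)"
proof (cases "I \<subseteq> {..<m} \<and> card I = m")
  case True
  then have I: "I = {..<m}" by (metis card_lessThan card_subset_eq finite_lessThan)
  show ?thesis unfolding wedge_def I frame_det_def
    by (simp, intro arg_cong[where f = det] eq_matI) (simp_all add: lessThan_atLeast0)
next
  case False
  then show ?thesis unfolding wedge_def by auto
qed

lemma pair_top_eq_frame_det: "pair_top m om u = om * frame_det m u"
  unfolding pair_top_def wedge_top by simp

lemma wedge_lincomb:
  assumes "\<And>j i. j < k \<Longrightarrow> X j i = (\<Sum>l<k. C l j * u l i)"
  shows "wedge m X k I = det (mat k k (\<lambda>(l, j). C l j)) * wedge m u k I"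
proof (cases "I \<subseteq> {..<m} \<and> card I = k")
  case True
  have "frame_det k (\<lambda>j r. X j (sorted_list_of_set I ! r))
      = det (mat k k (\<lambda>(l, j). C l j)) * frame_det k (\<lambda>j r. u j (sorted_list_of_set I ! r))"
    by (rule frame_det_mult) (simp add: assms)
  then show ?thesis using True unfolding wedge_def frame_det_def by simp
next
  case False
  then show ?thesis unfolding wedge_def by auto
qed

lemma fapp_0: "fapp 0 u v = v"
  by (simp add: fapp_def)

lemma the_wedge_ratio:
  assumes X: "wedge m X k = (\<lambda>I. r * wedge m g k I)" and g0: "wedge m g k \<noteq> (\<lambda>_. 0)"
  shows "(THE r. wedge m X k = (\<lambda>I. r * wedge m g k I)) = r"
proof (rule the_equality)
  fix r' assume "wedge m X k = (\<lambda>I. r' * wedge m g k I)"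
  then have r': "r' * wedge m g k I = r * wedge m g k I" for I by (metis X)
  obtain I where "wedge m g k I \<noteq> 0" using g0 by auto
  with r'[of I] show "r' = r" by simp
qed (rule X)

lemma frame_det_wedge_ratio:
  fixes X g u :: "nat \<Rightarrow> nat \<Rightarrow> 'a::field"
  assumes X: "\<And>j. j < k \<Longrightarrow> X j \<in> {lcomb d u k | d. True}"
    and g: "\<And>j. j < k \<Longrightarrow> g j \<in> {lcomb d u k | d. True}"
    and g0: "wedge m g k \<noteq> (\<lambda>_. 0)" and n: "a + k \<le> n"
  shows "(THE r. wedge m X k = (\<lambda>I. r * wedge m g k I)) * frame_det n (fapp a Y (fapp k g Z))
       = frame_det n (fapp a Y (fapp k X Z))"
proof -
  obtain C1 where C1: "\<And>j i. j < k \<Longrightarrow> X j i = (\<Sum>l<k. C1 l j * u l i)"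
    using span_coeffs[of k X u k] X by blast
  obtain C0 where C0: "\<And>j i. j < k \<Longrightarrow> g j i = (\<Sum>l<k. C0 l j * u l i)"
    using span_coeffs[of k g u k] g by blast
  define d1 where "d1 = det (mat k k (\<lambda>(l, j). C1 l j))"
  define d0 where "d0 = det (mat k k (\<lambda>(l, j). C0 l j))"
  have wX: "wedge m X k I = d1 * wedge m u k I" for I
    unfolding d1_def by (rule wedge_lincomb[OF C1])
  have wg: "wedge m g k I = d0 * wedge m u k I" for I
    unfolding d0_def by (rule wedge_lincomb[OF C0])
  have block: "frame_det n (fapp a Y (fapp k v Z)) = det (mat k k (\<lambda>(l, j). C l j)) * frame_det n (fapp a Y (fapp k u Z))"
    if "\<And>j i. j < k \<Longrightarrow> v j i = (\<Sum>l<k. C l j * u l i)" for v C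
    by (rule frame_det_block_mult[where a = a]) (use n that in \<open>auto simp: fapp_def intro!: sum.cong\<close>)
  obtain I where "wedge m g k I \<noteq> 0" using g0 by auto
  then have "d0 \<noteq> 0" using wg by auto
  then have "wedge m X k = (\<lambda>I. d1 / d0 * wedge m g k I)" by (simp add: fun_eq_iff wX wg)
  then have "(THE r. wedge m X k = (\<lambda>I. r * wedge m g k I)) = d1 / d0"
    by (rule the_wedge_ratio[OF _ g0])
  then show ?thesis
    using block[OF C1] block[OF C0] \<open>d0 \<noteq> 0\<close> unfolding d1_def d0_def by simp
qed

lemma the_wedge_ratio_top:
  assumes "frame_det m g \<noteq> 0"
  shows "(THE r. wedge m X m = (\<lambda>I. r * wedge m g m I)) = frame_det m X / frame_det m g"
  by (rule the_wedge_ratio) (use assms in \<open>auto simp: wedge_top fun_eq_iff\<close>)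

lemma frame_det_same_wedge_block:
  fixes p q u :: "nat \<Rightarrow> nat \<Rightarrow> 'a::field"
  assumes p: "\<And>j. j < k \<Longrightarrow> p j \<in> {lcomb d u k | d. True}"
    and q: "\<And>j. j < k \<Longrightarrow> q j \<in> {lcomb d u k | d. True}"
    and pq: "wedge m p k = wedge m q k" and q0: "wedge m q k \<noteq> (\<lambda>_. 0)" and n: "k \<le> n"
  shows "frame_det n (fapp k p Z) = frame_det n (fapp k q Z)"
proof -
  have "(THE r. wedge m p k = (\<lambda>I. r * wedge m q k I)) = 1"
    by (rule the_wedge_ratio) (use pq q0 in simp_all)
  then show ?thesis
    using frame_det_wedge_ratio[where X = p and g = q and u = u and k = k and m = m and a = 0 and n = n
        and Z = Z] p q q0 n by (simp add: fapp_0)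
qed

lemma decorated_flag_mono:
  assumes F: "decorated_flag m om Fs fr" and "1 \<le> i" "i \<le> j" "j < m"
  shows "Fs i \<subseteq> Fs j"
  using assms(2-)
proof (induction j)
  case (Suc j)
  show ?case
  proof (cases "i = Suc j")
    case False
    with Suc have "Fs i \<subseteq> Fs j" "1 \<le> j" "j + 1 < m" by auto
    moreover have "Fs j \<subseteq> Fs (j + 1)" if "1 \<le> j" "j + 1 < m"
      using F that unfolding decorated_flag_def by blast
    ultimately show ?thesis by auto
  qed simp
qed simp

lemma Xframe_mem_flag:
  assumes G: "decorated_flag m om Gs gfr"
    and fb: "\<And>k. 1 < k \<Longrightarrow> k \<le> m \<Longrightarrow> fb k \<in> Gs (m + 1 - k)"
    and hb: "\<And>k. 1 < k \<Longrightarrow> k \<le> m \<Longrightarrow> hb k \<in> Gs (m + 1 - k)"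
    and sum: "a + b + c = m - s" and s: "0 < s" and j: "j < m - s"
  shows "Xframe gfr fb hb s a b c j \<in> Gs (m - s)"
proof -
  have mono: "Gs i \<subseteq> Gs (m - s)" if "1 \<le> i" "i \<le> m - s" for i
    by (rule decorated_flag_mono[OF G]) (use that s j in auto)
  consider "j < a" | "a \<le> j" "j < a + b" | "a + b \<le> j" by linarith
  then show ?thesis
  proof cases
    case 1
    then have "Xframe gfr fb hb s a b c j = fb (s + 1 + j)" by (simp add: Xframe_def fapp_def)
    moreover have "fb (s + 1 + j) \<in> Gs (m - (s + j))" using fb[of "s + 1 + j"] s j by auto
    moreover have "Gs (m - (s + j)) \<subseteq> Gs (m - s)" by (rule mono) (use j in auto)
    ultimately show ?thesis by auto
  next
    case 2
    then have "\<not> j < a" "j - a < b" by linarith+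
    then have "Xframe gfr fb hb s a b c j = gfr b (j - a)" by (simp add: Xframe_def fapp_def)
    moreover have "gfr b (j - a) \<in> Gs b" using G 2 sum s unfolding decorated_flag_def by auto
    moreover have "Gs b \<subseteq> Gs (m - s)" by (rule mono) (use 2 sum in auto)
    ultimately show ?thesis by auto
  next
    case 3
    define k where "k = s + c - (j - a - b)"
    have k: "1 < k" "k \<le> m" "s + 1 \<le> k" using 3 sum s j unfolding k_def by auto
    have "\<not> j < a" "\<not> j - a < b" using 3 by linarith+
    then have "Xframe gfr fb hb s a b c j = hb k" by (simp add: Xframe_def fapp_def k_def)
    moreover have "Gs (m + 1 - k) \<subseteq> Gs (m - s)" by (rule mono) (use k in auto)
    ultimately show ?thesis using hb[OF k(1,2)] by auto
  qed
qed

lemma frame_det_fapp_fapp_full: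
  "a + k = n \<Longrightarrow> frame_det n (fapp a Y (fapp k X Z)) = frame_det n (fapp a Y X)"
  by (rule frame_det_cong) (auto simp: fapp_def)

lemma Delta_eq_frame_det:
  fixes om :: "'a::field"
  assumes F: "decorated_flag m om Fs ffr" and G: "decorated_flag m om Gs gfr"
    and fb_F: "\<And>k. 1 \<le> k \<Longrightarrow> k < m \<Longrightarrow> fb k \<in> Fs k"
    and fb_G: "\<And>k. 1 < k \<Longrightarrow> k \<le> m \<Longrightarrow> fb k \<in> Gs (m + 1 - k)"
    and hb_G: "\<And>k. 1 < k \<Longrightarrow> k \<le> m \<Longrightarrow> hb k \<in> Gs (m + 1 - k)"
    and fb_wedge: "0 < s \<Longrightarrow> wedge m (\<lambda>j. fb (j + 1)) s = wedge m (ffr s) s"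
    and sum: "a + b + c = m - s" and s: "s < m"
  shows "Delta m om ffr gfr hfr fb hb s a b c
    = om * frame_det m (fapp (s + a) (\<lambda>j. fb (j + 1)) (fapp b (gfr b) (\<lambda>j. hb (s + c - j))))
         * pair_top m om (fapp (m - s) (gfr (m - s)) (hfr s))"
proof -
  define f where "f = (\<lambda>j. fb (j + 1))"
  define X where "X = Xframe gfr fb hb s a b c"
  define g where "g = gfr (m - s)"
  have "fapp s f X = fapp (s + a) f (fapp b (gfr b) (\<lambda>j. hb (s + c - j)))"
    by (auto simp: fun_eq_iff fapp_def X_def Xframe_def f_def)
  moreover have "(THE r. wedge m X (m - s) = (\<lambda>I. r * wedge m g (m - s) I))
                   * pair_top m om (fapp s (ffr s) g) = om * frame_det m (fapp s f X)"
  proof (cases "s = 0")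
    case True
    have "om * frame_det m g = 1"
      using G True unfolding decorated_flag_def g_def pair_top_eq_frame_det by simp
    then have "frame_det m g \<noteq> 0" by auto
    then show ?thesis using True by (simp add: the_wedge_ratio_top pair_top_eq_frame_det fapp_0)
  next
    case False
    have flag: "subspace_dim m (Fs s) s" "subspace_dim m (Gs (m - s)) (m - s)"
      "\<And>j. j < s \<Longrightarrow> ffr s j \<in> Fs s" "\<And>j. j < m - s \<Longrightarrow> g j \<in> Gs (m - s)"
      "wedge m (ffr s) s \<noteq> (\<lambda>_. 0)" "wedge m g (m - s) \<noteq> (\<lambda>_. 0)"
      using F G False s unfolding decorated_flag_def g_def by auto
    obtain u where u: "Gs (m - s) = {lcomb d u (m - s) | d. True}"
      using flag(2) unfolding subspace_dim_def by blast
    obtain v where v: "Fs s = {lcomb d v s | d. True}"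
      using flag(1) unfolding subspace_dim_def by blast
    have X: "X j \<in> Gs (m - s)" if "j < m - s" for j
      unfolding X_def by (rule Xframe_mem_flag[OF G fb_G hb_G sum]) (use False that in auto)
    have f: "f j \<in> Fs s" if "j < s" for j
      using fb_F[of "j + 1"] decorated_flag_mono[OF F, of "j + 1" s] that s unfolding f_def by auto
    have "(THE r. wedge m X (m - s) = (\<lambda>I. r * wedge m g (m - s) I)) * frame_det m (fapp s (ffr s) g)
        = frame_det m (fapp s (ffr s) X)"
      using frame_det_wedge_ratio[of "m - s" X u g m s m "ffr s" g] X flag u s
      by (simp add: frame_det_fapp_fapp_full)
    also have "\<dots> = frame_det m (fapp s f X)"
      using frame_det_same_wedge_block[of s "ffr s" v f m m X] flag v f fb_wedge False s
      by (simp add: f_def)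
    finally show ?thesis by (simp add: pair_top_eq_frame_det)
  qed
  ultimately show ?thesis unfolding Delta_def X_def g_def f_def by simp
qed

lemma flag_frame_det_three_term:
  fixes m :: nat and A H :: "nat \<Rightarrow> nat \<Rightarrow> 'a::field" and gfr :: "nat \<Rightarrow> nat \<Rightarrow> nat \<Rightarrow> 'a"
  defines "D P B T \<equiv> frame_det m (fapp P A (fapp B (gfr B) (\<lambda>j. H (T - j))))"
  assumes G: "decorated_flag m om Gs gfr" and m: "m = p + b + c" and b: "0 < b" and c: "0 < c"
  shows "D p b t * D (p + 1) (b - 1) (t + 1)
       = D (p + 1) (b - 1) t * D p b (t + 1) + D p (b - 1) (t + 1) * D (p + 1) b t"
proof -
  have bm: "b \<in> {1..<m}" using m b c by auto
  then obtain u where u: "Gs b = {lcomb d u b | d. True}"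
    using G unfolding decorated_flag_def subspace_dim_def by blast
  have "gfr b j \<in> Gs b" if "j < b" for j
    using G bm that unfolding decorated_flag_def by auto
  moreover have "gfr (b - 1) j \<in> Gs b" if "j < b - 1" for j
    using G bm that decorated_flag_mono[OF G, of "b - 1" b] unfolding decorated_flag_def by auto
  ultimately show ?thesis
    unfolding D_def using m b c u
    by (intro frame_det_three_term[where n = m and p = p and b = b and c = c and u = u]) auto
qed

theorem mainTheorem14:
  fixes m :: nat and om :: "'a::field"
    and Fs Gs Hs :: "nat \<Rightarrow> (nat \<Rightarrow> 'a) set"
    and ffr gfr hfr :: "nat \<Rightarrow> nat \<Rightarrow> nat \<Rightarrow> 'a"
    and fb hb :: "nat \<Rightarrow> nat \<Rightarrow> 'a"
    and a b c s :: nat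
  assumes om: "om \<noteq> 0"
    and F: "decorated_flag m om Fs ffr"
    and G: "decorated_flag m om Gs gfr"
    and H: "decorated_flag m om Hs hfr"
    and FG: "transverse m Fs Gs" and GH: "transverse m Gs Hs" and FH: "transverse m Fs Hs"
    and fb: "\<forall>k\<in>{1..m}. fb k \<in> vecs m \<and> (k < m \<longrightarrow> fb k \<in> Fs k) \<and> (1 < k \<longrightarrow> fb k \<in> Gs (m + 1 - k))
               \<and> wedge m (\<lambda>j. fb (j + 1)) k = wedge m (ffr k) k"
    and hb: "\<forall>k\<in>{1..m}. hb k \<in> vecs m \<and> (1 < k \<longrightarrow> hb k \<in> Gs (m + 1 - k)) \<and> (k < m \<longrightarrow> hb k \<in> Hs k)
               \<and> wedge m (\<lambda>j. hb (k - j)) k = wedge m (hfr k) k"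
    and sum: "a + b + c = m - s" and a: "0 < a" and b: "0 < b" and c: "0 < c"
  shows "Delta m om ffr gfr hfr fb hb s a b c * Delta m om ffr gfr hfr fb hb (s + 1) a (b - 1) c
       = Delta m om ffr gfr hfr fb hb s (a + 1) (b - 1) c * Delta m om ffr gfr hfr fb hb (s + 1) (a - 1) b c
       + Delta m om ffr gfr hfr fb hb s a (b - 1) (c + 1) * Delta m om ffr gfr hfr fb hb (s + 1) a b (c - 1)"
proof -
  define D where "D P B T = frame_det m (fapp P (\<lambda>j. fb (j + 1)) (fapp B (gfr B) (\<lambda>j. hb (T - j))))"
    for P B T
  define Q where "Q s' = pair_top m om (fapp (m - s') (gfr (m - s')) (hfr s'))" for s'
  have Delta_D: "Delta m om ffr gfr hfr fb hb s' a' b' c' = om * D P b' T * Q s'"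
    if "a' + b' + c' = m - s'" "s' < m" "P = s' + a'" "T = s' + c'" for s' a' b' c' P T
    unfolding D_def Q_def that(3,4)
    by (rule Delta_eq_frame_det[OF F G]) (use fb hb that(1,2) in auto)
  have rel: "D (s + a) b (s + c) * D (s + a + 1) (b - 1) (s + c + 1)
      = D (s + a + 1) (b - 1) (s + c) * D (s + a) b (s + c + 1)
      + D (s + a) (b - 1) (s + c + 1) * D (s + a + 1) b (s + c)"
    unfolding D_def by (rule flag_frame_det_three_term[OF G, where p = "s + a" and c = c]) (use sum a b c in auto)
  have "Delta m om ffr gfr hfr fb hb s a b c * Delta m om ffr gfr hfr fb hb (s + 1) a (b - 1) c
      = om * om * Q s * Q (s + 1) * (D (s + a) b (s + c) * D (s + a + 1) (b - 1) (s + c + 1))"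
    using Delta_D[of a b c s "s + a" "s + c"] Delta_D[of a "b - 1" c "s + 1" "s + a + 1" "s + c + 1"]
      sum a b c by (simp add: mult_ac)
  also have "\<dots> = om * om * Q s * Q (s + 1) * (D (s + a + 1) (b - 1) (s + c) * D (s + a) b (s + c + 1)
      + D (s + a) (b - 1) (s + c + 1) * D (s + a + 1) b (s + c))"
    unfolding rel ..
  also have "\<dots> = Delta m om ffr gfr hfr fb hb s (a + 1) (b - 1) c * Delta m om ffr gfr hfr fb hb (s + 1) (a - 1) b c
       + Delta m om ffr gfr hfr fb hb s a (b - 1) (c + 1) * Delta m om ffr gfr hfr fb hb (s + 1) a b (c - 1)"
    using Delta_D[of "a + 1" "b - 1" c s "s + a + 1" "s + c"] Delta_D[of "a - 1" b c "s + 1" "s + a" "s + c + 1"]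
      Delta_D[of a "b - 1" "c + 1" s "s + a" "s + c + 1"] Delta_D[of a b "c - 1" "s + 1" "s + a + 1" "s + c"]
      sum a b c by (simp add: algebra_simps)
  finally show ?thesis .
qed

end
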